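(* Let $D$, $S$, $\nu$, $\alpha_1,\alpha_2,r_1$, $\lambda$, $s$, the families $\mathcal{F}_i$, the points $z_{i,j}$, the functions $\phi_{i,j}$, the coefficients $\beta_{i,j}$ and the functions $g_i$ be as described in the context. For each sufficiently small $\eta > 0$ there are $m, r > 0$ with $0 < \lambda r < r_1$, such that for each $i$, $1 \leq i \leq 2s$, the following hold for the family of balls $\mathcal{F}_i$ (chosen for this $r$) and for the functions $g_i$ (defined with this $m$): (a) If a point $z \in S$ lies in no ball in $\mathcal{F}_i$, then $|g_i(z)| < \eta$. (b) If $z \in \overline{D} \cap \mathbb{B}(z_{i,j}, \lambda r)$ for some $j$, then $|g_i(z) - \beta_{i,j}\phi_{i,j}(z)| < \eta$. (c) If $z \in S \cap \mathbb{B}(z_{i,j}, r)$ for some $j$, then $|\phi_{i,j}(z)| \geq C\eta^{\frac{1}{16}}$, where the constant $C$ is independent of $r$, $m$ and $\eta$. (d) If $z \in \overline{D} \cap b\mathbb{B}(z_{i,j}, \lambda r)$ for some $j$, then $|\phi_{i,j}(z)| < \eta^{\frac{2}{3}}$. Moreover, we can choose $r > 0$ arbitrarily small and make $m > 0$ as large as we want.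
   Context: $D$ is a bounded strictly convex domain with $\mathcal{C}^2$-boundary in $\mathbb{C}^n$, $S = bD$ its boundary, and $\nu(w)$ the outward unit normal to $S$ at $w \in S$. $\langle\cdot,\cdot\rangle$, $\|\cdot\|$, $\mathrm{dist}$ denote the Hermitian inner product, norm and distance in $\mathbb{C}^n$, and $\mathbb{B}(a,r)$ the open ball of radius $r$ centered at $a$. The constants $\alpha_1, \alpha_2, r_1 > 0$ satisfy: $\Re\langle w - z, \nu(w)\rangle \geq \alpha_1\|z-w\|^2$ for all $w \in S$, $z \in \overline{D}$ with $\mathrm{dist}(z, bD) < r_1$, and $\Re\langle w - z, \nu(w)\rangle \leq \alpha_2\|z-w\|^2$ for all $z, w \in S$. Set $\lambda = 4\sqrt{\alpha_2/\alpha_1}$. The positive integer $s$ is such that for each $r > 0$ there are $s$ families of balls $\mathcal{F}_1, \dots, \mathcal{F}_s$, $\mathcal{F}_i = \{\mathbb{B}(z_{i,j}, \lambda r) : 1 \leq j \leq N_i\}$, with centers $z_{i,j} \in S$, such that the balls in each family are pairwise disjoint and $S \subset \bigcup_{i=1}^s\bigcup_{j=1}^{N_i}\mathbb{B}(z_{i,j}, r)$. For $1 \leq i \leq s$, $1\le j\le N_i$, set $z_{i+s,j} = z_{i,j}$ and $\mathcal{F}_{i+s} = \mathcal{F}_i$. For $m > 0$, $1 \leq i \leq 2s$, $1 \leq j \leq N_i$, define $\phi_{i,j}(z) = e^{-m\langle z_{i,j} - z, \nu(z_{i,j})\rangle}$, and for given complex numbers $\beta_{i,j}$ with $|\beta_{i,j}|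 \leq 1$ let $g_i(z) = \sum_{j=1}^{N_i}\beta_{i,j}\phi_{i,j}(z)$ (an entire function). *)

theory Defs
  imports "HOL-Analysis.Analysis"
begin

definition cinner :: "complex^'n \<Rightarrow> complex^'n \<Rightarrow> complex" where
  "cinner a b = (\<Sum>k\<in>UNIV. a$k * cnj (b$k))"

definition C2_on :: "('a::real_normed_vector) set \<Rightarrow> ('a \<Rightarrow> real) \<Rightarrow> bool" where
  "C2_on U \<rho> \<longleftrightarrow> (\<exists>\<rho>1 :: 'a \<Rightarrow> ('a \<Rightarrow>\<^sub>L real). \<exists>\<rho>2 :: 'a \<Rightarrow> ('a \<Rightarrow>\<^sub>L ('a \<Rightarrow>\<^sub>L real)).
      (\<forall>x\<in>U. (\<rho> has_derivative blinfun_apply (\<rho>1 x)) (at x)) \<and>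
      (\<forall>x\<in>U. (\<rho>1 has_derivative blinfun_apply (\<rho>2 x)) (at x)) \<and>
      continuous_on U \<rho>2)"

text \<open>D is a domain with C^2 boundary and nu is its outward unit normal field on the boundary:
  there is a C^2 defining function rho near the boundary, with D = {rho < 0} near bD, nonvanishing
  gradient on bD, and nu w = grad rho(w) / |grad rho(w)|.  (For vectors in C^n the real inner
  product x \<bullet> y equals Re of the Hermitian one, so the real gradient is the right vector.)\<close>
definition C2_boundary_normal :: "(complex^'n) set \<Rightarrow> (complex^'n \<Rightarrow> complex^'n) \<Rightarrow> bool" where
  "C2_boundary_normal D \<nu> \<longleftrightarrow> (\<exists>U \<rho>. open U \<and> frontier D \<subseteq> U \<and> C2_on U \<rho> \<and>
      D \<inter> U = {x\<in>U. \<rho> x < 0} \<and>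
      (\<forall>w\<in>frontier D. \<exists>g. (\<rho> has_derivative (\<lambda>h. g \<bullet> h)) (at w) \<and> g \<noteq> 0 \<and>
          \<nu> w = g /\<^sub>R norm g))"

definition strictly_convex_set :: "(complex^'n) set \<Rightarrow> bool" where
  "strictly_convex_set D \<longleftrightarrow> convex D \<and>
     (\<forall>x\<in>closure D. \<forall>y\<in>closure D. x \<noteq> y \<longrightarrow> open_segment x y \<subseteq> D)"

definition phi :: "(complex^'n \<Rightarrow> complex^'n) \<Rightarrow> real \<Rightarrow> complex^'n \<Rightarrow> complex^'n \<Rightarrow> complex" where
  "phi \<nu> m w z = exp (- complex_of_real m * cinner (w - z) (\<nu> w))"

text \<open>Index convention z_{i+s,j} = z_{i,j}, F_{i+s} = F_i for 1 <= i <= s.\<close>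
definition idx :: "nat \<Rightarrow> nat \<Rightarrow> nat" where
  "idx s i = (if i \<le> s then i else i - s)"

end

theory Submission
  imports Defs
begin

text \<open>Let d be the real dimension and q = eta / (4 * 3^d). Choose r small and m with
  m alpha2 r^2 = -ln q / 16; as lambda^2 alpha1 = 16 alpha2 this means m alpha1 (lambda r)^2 = -ln q,
  and m is large when r is small. The alpha1-estimate bounds |phi_ij(z)| by the Gaussian
  q^((|z - z_ij| / lambda r)^2), which is (d) at distance lambda r; the alpha2-estimate gives
  |phi_ij| >= exp (-m alpha2 r^2) = q^(1/16) on S \<inter> B(z_ij, r), which is (c). For (a) and (b):
  the balls of one family are disjoint, so by comparing volumes at most 3^(k d) centres lie at
  distance between k lambda r and (k+1) lambda r from z, and each contributes at most
  eta (4 * 3^d)^-k; the centres whose ball misses z thus contribute at most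
  eta (1/4 + 1/16 + ...) = eta / 3.\<close>

lemma card_centers_near_disjoint_balls:
  fixes z :: "'a::euclidean_space" and w :: "nat \<Rightarrow> 'a"
  assumes J: "finite J" and \<rho>: "\<rho> > 0" and R: "R \<ge> 0"
    and disj: "\<And>j j'. j \<in> J \<Longrightarrow> j' \<in> J \<Longrightarrow> j \<noteq> j' \<Longrightarrow> ball (w j) \<rho> \<inter> ball (w j') \<rho> = {}"
  shows "real (card {j\<in>J. dist z (w j) < R}) \<le> ((R + \<rho>) / \<rho>) ^ DIM('a)"
proof -
  define J' where "J' = {j\<in>J. dist z (w j) < R}"
  let ?v = "unit_ball_vol (DIM('a))"
  have fin: "finite J'" using J by (simp add: J'_def)
  have sub: "(\<Union>j\<in>J'. ball (w j) \<rho>) \<subseteq> ball z (R + \<rho>)"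
    by (auto simp: J'_def) (smt (verit) dist_commute dist_triangle)
  have "disjoint_family_on (\<lambda>j. ball (w j) \<rho>) J'"
    using disj by (auto simp: disjoint_family_on_def J'_def)
  then have "real (card J') * (?v * \<rho> ^ DIM('a)) = measure lborel (\<Union>j\<in>J'. ball (w j) \<rho>)"
    using fin \<rho> by (subst measure_finite_Union) (auto simp: emeasure_ball measure_def)
  also have "\<dots> \<le> measure lborel (ball z (R + \<rho>))"
    by (rule measure_mono_fmeasurable[OF sub]) (use \<rho> R in \<open>auto simp: fmeasurable_def emeasure_ball\<close>)
  also have "\<dots> = ?v * (R + \<rho>) ^ DIM('a)"
    using \<rho> R by (simp add: measure_def emeasure_ball)
  finally have "real (card J') * \<rho> ^ DIM('a) \<le> (R + \<rho>) ^ DIM('a)"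
    by (simp add: mult.assoc[symmetric] mult.commute[of _ ?v])
  then show ?thesis using \<rho> by (simp add: J'_def power_divide pos_le_divide_eq)
qed

lemma card_floor_dist_layer_le:
  fixes z :: "'a::euclidean_space" and w :: "nat \<Rightarrow> 'a"
  assumes J: "finite J" and \<rho>: "\<rho> > 0" and n: "n \<ge> 1"
    and disj: "\<And>j j'. j \<in> J \<Longrightarrow> j' \<in> J \<Longrightarrow> j \<noteq> j' \<Longrightarrow> ball (w j) \<rho> \<inter> ball (w j') \<rho> = {}"
  shows "real (card {j\<in>J. nat \<lfloor>dist z (w j) / \<rho>\<rfloor> = n}) \<le> 3 ^ (n * DIM('a))"
proof -
  have "card {j\<in>J. nat \<lfloor>dist z (w j) / \<rho>\<rfloor> = n} \<le> card {j\<in>J. dist z (w j) < (real n + 1) * \<rho>}"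
  proof (rule card_mono)
    show "{j\<in>J. nat \<lfloor>dist z (w j) / \<rho>\<rfloor> = n} \<subseteq> {j\<in>J. dist z (w j) < (real n + 1) * \<rho>}"
    proof
      fix j assume j: "j \<in> {j\<in>J. nat \<lfloor>dist z (w j) / \<rho>\<rfloor> = n}"
      then have "\<lfloor>dist z (w j) / \<rho>\<rfloor> = int n" using n by auto
      then have "dist z (w j) / \<rho> < real n + 1" by (simp add: floor_eq_iff)
      with j \<rho> show "j \<in> {j\<in>J. dist z (w j) < (real n + 1) * \<rho>}" by (simp add: divide_less_eq)
    qed
  qed (use J in simp)
  also have "real (card {j\<in>J. dist z (w j) < (real n + 1) * \<rho>}) \<le> (((real n + 1) * \<rho> + \<rho>) / \<rho>) ^ DIM('a)"
    by (rule card_centers_near_disjoint_balls) (use J \<rho> disj in auto)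
  also have "((real n + 1) * \<rho> + \<rho>) / \<rho> = real n + 2"
    using \<rho> by (simp add: field_simps)
  also have "(real n + 2) ^ DIM('a) \<le> (3 ^ n) ^ DIM('a)"
  proof (rule power_mono)
    show "real n + 2 \<le> 3 ^ n"
      using n by (induction n rule: dec_induct) auto
  qed simp
  finally show ?thesis by (simp add: power_mult)
qed

lemma sum_quarter_powers_le:
  assumes "finite K" "0 \<notin> K"
  shows "(\<Sum>k\<in>K. (1/4::real) ^ k) \<le> 1/3"
proof -
  have "(\<lambda>k. (1/4::real) ^ Suc k) sums (1/3)"
    using sums_mult[OF geometric_sums[of "1/4::real"], of "1/4"] by simp
  then have sums: "(\<lambda>k. if k = 0 then 0 else (1/4::real) ^ k) sums (1/3)"
    using sums_Suc_iff[of "\<lambda>k. if k = 0 then 0 else (1/4::real) ^ k" "1/3"] by simp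
  have "(\<Sum>k\<in>K. (1/4::real) ^ k) = (\<Sum>k\<in>K. if k = 0 then 0 else (1/4) ^ k)"
    using assms(2) by (intro sum.cong refl) metis
  also have "\<dots> \<le> (\<Sum>k. if k = 0 then 0 else (1/4::real) ^ k)"
    by (rule sum_le_suminf) (use sums assms(1) in \<open>auto simp: sums_iff\<close>)
  also have "\<dots> = 1/3" using sums by (simp add: sums_iff)
  finally show ?thesis .
qed

lemma powr_square_le_power_floor:
  fixes q x :: real
  assumes "0 < q" "q \<le> 1" "1 \<le> x"
  shows "q powr (x^2) \<le> q ^ nat \<lfloor>x\<rfloor>"
proof -
  have "real (nat \<lfloor>x\<rfloor>) \<le> x" using assms(3) by linarith
  also have "x \<le> x^2" using power_increasing[of 1 2 x] assms(3) by simp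
  finally have "q powr (x^2) \<le> q powr real (nat \<lfloor>x\<rfloor>)"
    using assms by (intro powr_mono') auto
  then show ?thesis using assms(1) by (simp add: powr_realpow)
qed

lemma sum_le_over_separated_disjoint_balls:
  fixes z :: "'a::euclidean_space" and w :: "nat \<Rightarrow> 'a" and f :: "nat \<Rightarrow> real"
  assumes J: "finite J" and \<rho>: "\<rho> > 0"
    and disj: "\<And>j j'. j \<in> J \<Longrightarrow> j' \<in> J \<Longrightarrow> j \<noteq> j' \<Longrightarrow> ball (w j) \<rho> \<inter> ball (w j') \<rho> = {}"
    and far: "\<And>j. j \<in> J \<Longrightarrow> \<rho> \<le> dist z (w j)"
    and \<eta>: "0 < \<eta>" "\<eta> \<le> 1"
    and f: "\<And>j. j \<in> J \<Longrightarrow> f j \<le> (\<eta> / (4 * 3 ^ DIM('a))) powr ((dist z (w j) / \<rho>)^2)"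
  shows "sum f J \<le> \<eta> / 3"
proof -
  define a :: real where "a = 1 / (4 * 3 ^ DIM('a))"
  define k where "k j = nat \<lfloor>dist z (w j) / \<rho>\<rfloor>" for j
  have "1 \<le> 4 * (3::real) ^ DIM('a)"
    using one_le_power[of "3::real" "DIM('a)"] by linarith
  then have a: "0 < a" "a \<le> 1" by (simp_all add: a_def)
  have one_le: "1 \<le> dist z (w j) / \<rho>" if "j \<in> J" for j
    using far[OF that] \<rho> by simp
  have k: "1 \<le> k j" if "j \<in> J" for j
    using one_le[OF that] by (simp add: k_def le_nat_floor)
  have term_le: "f j \<le> \<eta> * a ^ k j" if j: "j \<in> J" for j
  proof -
    have "f j \<le> (a * \<eta>) ^ k j"
      using f[OF j] powr_square_le_power_floor[OF _ _ one_le[OF j], of "a * \<eta>"] a \<eta>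
      by (simp add: a_def k_def mult_le_one)
    also have "\<dots> \<le> \<eta> * a ^ k j"
      using \<eta> a k[OF j] by (simp add: power_mult_distrib mult.commute mult_left_mono power_le_one
          power_decreasing[of 1 "k j" \<eta>, simplified])
    finally show ?thesis .
  qed
  have "sum f J \<le> \<eta> * (\<Sum>j\<in>J. a ^ k j)"
    using sum_mono[OF term_le] by (simp add: sum_distrib_left)
  also have "(\<Sum>j\<in>J. a ^ k j) = (\<Sum>n\<in>k ` J. \<Sum>j\<in>{j\<in>J. k j = n}. a ^ k j)"
    by (rule sum.image_gen[OF J])
  also have "\<dots> = (\<Sum>n\<in>k ` J. real (card {j\<in>J. k j = n}) * a ^ n)"
    by (intro sum.cong refl) simp
  also have "\<dots> \<le> (\<Sum>n\<in>k ` J. (1/4) ^ n)"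
  proof (rule sum_mono)
    fix n assume "n \<in> k ` J"
    then have n: "1 \<le> n" using k by auto
    have "real (card {j\<in>J. k j = n}) * a ^ n \<le> 3 ^ (n * DIM('a)) * a ^ n"
      using card_floor_dist_layer_le[where z = z and w = w, OF J \<rho> n disj] a
      by (intro mult_right_mono) (simp_all add: k_def)
    also have "\<dots> = (3 ^ DIM('a) * a) ^ n"
      by (metis mult.commute power_mult power_mult_distrib)
    also have "3 ^ DIM('a) * a = 1/4" by (simp add: a_def)
    finally show "real (card {j\<in>J. k j = n}) * a ^ n \<le> (1/4) ^ n" .
  qed
  also have "\<dots> \<le> 1/3"
    using J k by (intro sum_quarter_powers_le) force+
  finally show ?thesis using \<eta> by (simp add: mult_left_mono)
qed

lemma sum_bumps_estimates:
  fixes w :: "nat \<Rightarrow> 'a::euclidean_space" and F :: "nat \<Rightarrow> 'a \<Rightarrow> 'b::real_normed_vector"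
  assumes J: "finite J" and \<rho>: "\<rho> > 0"
    and disj: "\<And>j j'. j \<in> J \<Longrightarrow> j' \<in> J \<Longrightarrow> j \<noteq> j' \<Longrightarrow> ball (w j) \<rho> \<inter> ball (w j') \<rho> = {}"
    and \<eta>: "0 < \<eta>" "\<eta> \<le> 1"
    and F: "\<And>j z. j \<in> J \<Longrightarrow> z \<in> U \<Longrightarrow>
              norm (F j z) \<le> (\<eta> / (4 * 3 ^ DIM('a))) powr ((dist z (w j) / \<rho>)^2)"
  shows "z \<in> U \<Longrightarrow> (\<forall>j\<in>J. z \<notin> ball (w j) \<rho>) \<Longrightarrow> norm (\<Sum>j\<in>J. F j z) < \<eta>"
    and "j \<in> J \<Longrightarrow> z \<in> U \<Longrightarrow> z \<in> ball (w j) \<rho> \<Longrightarrow> norm ((\<Sum>j\<in>J. F j z) - F j z) < \<eta>"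
proof -
  have bound: "norm (\<Sum>j\<in>K. F j z) < \<eta>"
    if "K \<subseteq> J" "z \<in> U" "\<And>j. j \<in> K \<Longrightarrow> \<rho> \<le> dist z (w j)" for K z
  proof -
    have "norm (\<Sum>j\<in>K. F j z) \<le> (\<Sum>j\<in>K. norm (F j z))" by (rule norm_sum)
    also have "\<dots> \<le> \<eta> / 3"
    proof (rule sum_le_over_separated_disjoint_balls[where w = w and z = z])
      show "ball (w j) \<rho> \<inter> ball (w j') \<rho> = {}" if "j \<in> K" "j' \<in> K" "j \<noteq> j'" for j j'
        using disj that \<open>K \<subseteq> J\<close> by blast
    qed (use that J \<rho> \<eta> F in \<open>auto intro: finite_subset\<close>)
    finally show ?thesis using \<eta> by linarith
  qed
  show "norm (\<Sum>j\<in>J. F j z) < \<eta>" if "z \<in> U" "\<forall>j\<in>J. z \<notin> ball (w j) \<rho>"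
    using that by (intro bound) (auto simp: dist_commute not_less)
  show "norm ((\<Sum>j\<in>J. F j z) - F j z) < \<eta>" if j: "j \<in> J" and "z \<in> U" "z \<in> ball (w j) \<rho>"
  proof -
    have "z \<notin> ball (w j') \<rho>" if "j' \<in> J - {j}" for j'
      using disj[of j j'] j that \<open>z \<in> ball (w j) \<rho>\<close> by auto
    then have "norm (\<Sum>j'\<in>J - {j}. F j' z) < \<eta>"
      using \<open>z \<in> U\<close> by (intro bound) (auto simp: dist_commute not_less)
    then show ?thesis using J j by (simp add: sum.remove)
  qed
qed

lemma norm_phi: "norm (phi \<nu> m w z) = exp (- m * Re (cinner (w - z) (\<nu> w)))"
  by (simp add: phi_def norm_exp_eq_Re)

lemma norm_phi_le_powr:
  assumes "\<alpha> * (norm (z - w))^2 \<le> Re (cinner (w - z) (\<nu> w))" "m \<ge> 0"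
    and "0 < q" "m * \<alpha> * \<rho>^2 = - ln q" "\<rho> \<noteq> 0"
  shows "norm (phi \<nu> m w z) \<le> q powr ((dist z w / \<rho>)^2)"
proof -
  have "norm (phi \<nu> m w z) \<le> exp (- m * (\<alpha> * (norm (z - w))^2))"
    unfolding norm_phi using assms(1,2) by (simp add: mult_left_mono)
  also have "- m * (\<alpha> * (norm (z - w))^2) = (dist z w / \<rho>)^2 * ln q"
  proof -
    have "ln q = - (m * \<alpha> * \<rho>^2)" using assms(4) by simp
    then show ?thesis using assms(5) by (simp add: dist_norm power_divide field_simps)
  qed
  finally show ?thesis using assms(3) by (simp add: powr_def)
qed

lemma norm_phi_ge_exp:
  assumes "Re (cinner (w - z) (\<nu> w)) \<le> \<alpha> * (norm (z - w))^2" "m \<ge> 0" "\<alpha> \<ge> 0"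
    and "dist z w < r"
  shows "exp (- m * \<alpha> * r^2) \<le> norm (phi \<nu> m w z)"
proof -
  have "\<alpha> * (norm (z - w))^2 \<le> \<alpha> * r^2"
    using assms(3,4) by (intro mult_left_mono power_mono) (auto simp: dist_norm)
  then show ?thesis
    unfolding norm_phi using assms(1,2) by (simp add: mult_left_mono mult.assoc)
qed

lemma exists_frequency_and_radius:
  fixes \<alpha> t lam r0 r1 M :: real
  assumes "\<alpha> > 0" "t > 0" "lam > 0" "r0 > 0" "r1 > 0"
  shows "\<exists>m r. M < m \<and> 0 < m \<and> 0 < r \<and> r < r0 \<and> lam * r < r1 \<and> m * \<alpha> * r^2 = t"
proof -
  define r where "r = min (r0/2) (min (r1/(2*lam)) (sqrt (t/(\<alpha>*(\<bar>M\<bar>+1)))))"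
  define m where "m = t / (\<alpha> * r^2)"
  have r: "0 < r" "r < r0" using assms by (simp_all add: r_def)
  have "r \<le> r1/(2*lam)" by (simp add: r_def)
  then have "lam * r \<le> r1/2" using assms by (simp add: le_divide_eq mult_ac)
  moreover have "r^2 \<le> t/(\<alpha>*(\<bar>M\<bar>+1))"
    using r assms by (metis r_def min.boundedE power_mono real_sqrt_pow2 less_eq_real_def
        divide_nonneg_pos mult_pos_pos abs_ge_zero add_nonneg_pos zero_less_one)
  then have "r^2 * (\<alpha> * (\<bar>M\<bar> + 1)) \<le> t"
    using assms by (simp add: pos_le_divide_eq)
  then have "(\<bar>M\<bar> + 1) * (\<alpha> * r^2) \<le> t" by (simp add: mult_ac)
  then have "\<bar>M\<bar> + 1 \<le> m"
    using assms r by (simp add: m_def le_divide_eq)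
  moreover have "m * \<alpha> * r^2 = t" using assms r by (simp add: m_def)
  ultimately show ?thesis using r assms by (intro exI[of _ m] exI[of _ r]) auto
qed

lemma phi_family_estimates:
  fixes D :: "(complex^'n) set" and w :: "nat \<Rightarrow> complex^'n" and \<beta> :: "nat \<Rightarrow> complex" and \<eta> :: real
  defines "q \<equiv> \<eta> / (4 * 3 ^ DIM(complex^'n))"
  assumes alpha1: "\<And>w z. w \<in> frontier D \<Longrightarrow> z \<in> closure D \<Longrightarrow> infdist z (frontier D) < r1 \<Longrightarrow>
                     Re (cinner (w - z) (\<nu> w)) \<ge> \<alpha>1 * (norm (z - w))^2"
    and alpha2: "\<And>w z. w \<in> frontier D \<Longrightarrow> z \<in> frontier D \<Longrightarrow>
                     Re (cinner (w - z) (\<nu> w)) \<le> \<alpha>2 * (norm (z - w))^2"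
    and "\<alpha>2 \<ge> 0"
    and J: "finite J" and centers: "\<And>j. j \<in> J \<Longrightarrow> w j \<in> frontier D"
    and disj: "\<And>j j'. j \<in> J \<Longrightarrow> j' \<in> J \<Longrightarrow> j \<noteq> j' \<Longrightarrow> ball (w j) \<rho> \<inter> ball (w j') \<rho> = {}"
    and \<rho>: "\<rho> = lam * r" "0 < \<rho>" "\<rho> < r1" and lam: "lam^2 * \<alpha>1 = 16 * \<alpha>2"
    and \<eta>: "0 < \<eta>" "\<eta> < 1" and \<beta>: "\<And>j. norm (\<beta> j) \<le> 1"
    and "m \<ge> 0" and m_r: "m * \<alpha>2 * r^2 = - ln q / 16"
  shows "(\<forall>z\<in>frontier D. (\<forall>j\<in>J. z \<notin> ball (w j) \<rho>) \<longrightarrow>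
            norm (\<Sum>j\<in>J. \<beta> j * phi \<nu> m (w j) z) < \<eta>) \<and>
         (\<forall>j\<in>J. \<forall>z\<in>closure D \<inter> ball (w j) \<rho>.
            norm ((\<Sum>j\<in>J. \<beta> j * phi \<nu> m (w j) z) - \<beta> j * phi \<nu> m (w j) z) < \<eta>) \<and>
         (\<forall>j\<in>J. \<forall>z\<in>frontier D \<inter> ball (w j) r.
            norm (phi \<nu> m (w j) z) \<ge> (1 / (4 * 3 ^ DIM(complex^'n))) powr (1/16) * \<eta> powr (1/16)) \<and>
         (\<forall>j\<in>J. \<forall>z\<in>closure D \<inter> sphere (w j) \<rho>. norm (phi \<nu> m (w j) z) < \<eta> powr (2/3))"
proof (intro conjI ballI impI)
  define U where "U = {z \<in> closure D. infdist z (frontier D) < r1}"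
  have "1 < 4 * (3::real) ^ DIM(complex^'n)"
    using one_le_power[of "3::real" "DIM(complex^'n)"] by linarith
  then have q: "0 < q" "q < \<eta>" using \<eta> by (simp_all add: q_def divide_less_eq)
  have "m * \<alpha>1 * \<rho>^2 = (lam^2 * \<alpha>1) * (m * r^2)"
    by (simp add: \<rho>(1) power_mult_distrib mult_ac)
  also have "\<dots> = 16 * (m * \<alpha>2 * r^2)" unfolding lam by (simp add: mult_ac)
  finally have m_\<rho>: "m * \<alpha>1 * \<rho>^2 = - ln q" using m_r by simp
  have upper: "norm (phi \<nu> m (w j) z) \<le> q powr ((dist z (w j) / \<rho>)^2)" if "j \<in> J" "z \<in> U" for j z
  proof (rule norm_phi_le_powr)
    show "\<alpha>1 * (norm (z - w j))^2 \<le> Re (cinner (w j - z) (\<nu> (w j)))"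
      using alpha1[OF centers[OF that(1)]] that(2) by (auto simp: U_def)
  qed (use \<rho> q \<open>m \<ge> 0\<close> m_\<rho> in auto)
  have U_near_center: "z \<in> U" if "j \<in> J" "z \<in> closure D" "dist z (w j) \<le> \<rho>" for j z
    using infdist_le[OF centers[OF that(1)], of z] that \<rho> by (auto simp: U_def)
  have bumps: "norm (\<beta> j * phi \<nu> m (w j) z) \<le> q powr ((dist z (w j) / \<rho>)^2)" if "j \<in> J" "z \<in> U" for j z
    using upper[OF that] \<beta>[of j]
    by (simp add: norm_mult) (meson mult_left_le_one_le norm_ge_zero order_trans)
  note sum_estimates = sum_bumps_estimates[where F = "\<lambda>j z. \<beta> j * phi \<nu> m (w j) z",
      OF J \<rho>(2) disj \<eta>(1) less_imp_le[OF \<eta>(2)] bumps[unfolded q_def]]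
  show "norm (\<Sum>j\<in>J. \<beta> j * phi \<nu> m (w j) z) < \<eta>"
    if "z \<in> frontier D" "\<forall>j\<in>J. z \<notin> ball (w j) \<rho>" for z
  proof -
    have "z \<in> U" using that(1) \<rho> by (simp add: U_def frontier_def)
    then show ?thesis using sum_estimates(1) that(2) by blast
  qed
  show "norm ((\<Sum>j\<in>J. \<beta> j * phi \<nu> m (w j) z) - \<beta> j * phi \<nu> m (w j) z) < \<eta>"
    if "j \<in> J" "z \<in> closure D \<inter> ball (w j) \<rho>" for j z
    using that U_near_center[of j z] by (intro sum_estimates(2)) (auto simp: dist_commute)
  show "(1 / (4 * 3 ^ DIM(complex^'n))) powr (1/16) * \<eta> powr (1/16) \<le> norm (phi \<nu> m (w j) z)"
    if "j \<in> J" "z \<in> frontier D \<inter> ball (w j) r" for j z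
  proof -
    have "(1 / (4 * 3 ^ DIM(complex^'n))) powr (1/16) * \<eta> powr (1/16) = q powr (1/16)"
      using \<eta> by (simp add: q_def flip: powr_mult)
    also have "\<dots> = exp (- m * \<alpha>2 * r^2)"
      using q by (simp add: m_r powr_def)
    also have "\<dots> \<le> norm (phi \<nu> m (w j) z)"
      using that \<open>m \<ge> 0\<close> \<open>\<alpha>2 \<ge> 0\<close> by (intro norm_phi_ge_exp alpha2 centers) (auto simp: dist_commute)
    finally show ?thesis .
  qed
  show "norm (phi \<nu> m (w j) z) < \<eta> powr (2/3)" if "j \<in> J" "z \<in> closure D \<inter> sphere (w j) \<rho>" for j z
  proof -
    have "norm (phi \<nu> m (w j) z) \<le> q"
      using upper[of j z] U_near_center[of j z] that \<rho>(2) q by (auto simp: dist_commute)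
    also have "q < \<eta> powr 1" using q \<eta> by simp
    also have "\<dots> \<le> \<eta> powr (2/3)" using \<eta> by (intro powr_mono') auto
    finally show ?thesis .
  qed
qed

theorem lemma2p3:
  fixes D :: "(complex^'n) set"
    and \<nu> :: "complex^'n \<Rightarrow> complex^'n"
    and \<alpha>1 \<alpha>2 r1 lam :: real
    and s :: nat
    and zc :: "real \<Rightarrow> nat \<Rightarrow> nat \<Rightarrow> complex^'n"
    and N :: "real \<Rightarrow> nat \<Rightarrow> nat"
  assumes D_domain: "open D" "connected D" "D \<noteq> {}" "bounded D"
    and D_sconv: "strictly_convex_set D"
    and D_C2: "C2_boundary_normal D \<nu>"
    and consts_pos: "\<alpha>1 > 0" "\<alpha>2 > 0" "r1 > 0"
    and alpha1: "\<And>w z. w \<in> frontier D \<Longrightarrow> z \<in> closure D \<Longrightarrow> infdist z (frontier D) < r1 \<Longrightarrow>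
                   Re (cinner (w - z) (\<nu> w)) \<ge> \<alpha>1 * (norm (z - w))^2"
    and alpha2: "\<And>w z. w \<in> frontier D \<Longrightarrow> z \<in> frontier D \<Longrightarrow>
                   Re (cinner (w - z) (\<nu> w)) \<le> \<alpha>2 * (norm (z - w))^2"
    and lam_def: "lam = 4 * sqrt (\<alpha>2 / \<alpha>1)"
    and s_pos: "s > 0"
    and centers: "\<And>r i j. r > 0 \<Longrightarrow> i \<in> {1..s} \<Longrightarrow> j \<in> {1..N r i} \<Longrightarrow> zc r i j \<in> frontier D"
    and disjoint: "\<And>r i j j'. r > 0 \<Longrightarrow> i \<in> {1..s} \<Longrightarrow> j \<in> {1..N r i} \<Longrightarrow> j' \<in> {1..N r i} \<Longrightarrow>
                    j \<noteq> j' \<Longrightarrow> ball (zc r i j) (lam * r) \<inter> ball (zc r i j') (lam * r) = {}"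
    and cover: "\<And>r. r > 0 \<Longrightarrow> frontier D \<subseteq> (\<Union>i\<in>{1..s}. \<Union>j\<in>{1..N r i}. ball (zc r i j) r)"
  shows "\<exists>C>0. \<exists>\<eta>0>0. \<forall>\<eta>. 0 < \<eta> \<and> \<eta> < \<eta>0 \<longrightarrow>
     (\<forall>r0>0. \<forall>M. \<exists>m r. m > M \<and> 0 < r \<and> r < r0 \<and> 0 < lam * r \<and> lam * r < r1 \<and>
       (\<forall>\<beta> :: nat \<Rightarrow> nat \<Rightarrow> complex. (\<forall>i j. norm (\<beta> i j) \<le> 1) \<longrightarrow>
         (\<forall>i\<in>{1 .. 2 * s}.
           (let Ni = N r (idx s i); zz = zc r (idx s i);
                g = (\<lambda>z. \<Sum>j\<in>{1..Ni}. \<beta> i j * phi \<nu> m (zz j) z) in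
            (\<forall>z\<in>frontier D. (\<forall>j\<in>{1..Ni}. z \<notin> ball (zz j) (lam * r)) \<longrightarrow> norm (g z) < \<eta>) \<and>
            (\<forall>j\<in>{1..Ni}. \<forall>z\<in>closure D \<inter> ball (zz j) (lam * r).
                norm (g z - \<beta> i j * phi \<nu> m (zz j) z) < \<eta>) \<and>
            (\<forall>j\<in>{1..Ni}. \<forall>z\<in>frontier D \<inter> ball (zz j) r.
                norm (phi \<nu> m (zz j) z) \<ge> C * \<eta> powr (1/16)) \<and>
            (\<forall>j\<in>{1..Ni}. \<forall>z\<in>closure D \<inter> sphere (zz j) (lam * r).
                norm (phi \<nu> m (zz j) z) < \<eta> powr (2/3))))))"
proof -
  define c :: real where "c = 4 * 3 ^ DIM(complex^'n)"
  have lam: "lam > 0" "lam^2 * \<alpha>1 = 16 * \<alpha>2"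
    using consts_pos by (simp_all add: lam_def power_mult_distrib)
  have "1 \<le> c" unfolding c_def using one_le_power[of "3::real" "DIM(complex^'n)"] by linarith
  show ?thesis
  proof (rule exI[of _ "(1 / c) powr (1/16)"], rule conjI, simp add: c_def,
      rule exI[of _ 1], intro conjI allI impI, goal_cases)
    case (2 \<eta> r0 M)
    then have \<eta>: "0 < \<eta>" "\<eta> < 1" and "r0 > 0" by auto
    have "- ln (\<eta> / c) / 16 > 0" using \<eta> \<open>1 \<le> c\<close> by simp
    then obtain m r where m: "M < m" "0 < m" and r: "0 < r" "r < r0" "lam * r < r1"
      and m_r: "m * \<alpha>2 * r^2 = - ln (\<eta> / c) / 16"
      using exists_frequency_and_radius[OF consts_pos(2) _ lam(1) \<open>r0 > 0\<close> consts_pos(3)] by blast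
    show ?case
    proof (rule exI[of _ m], rule exI[of _ r], intro conjI allI impI ballI, goal_cases)
      case (6 \<beta> i)
      have "idx s i \<in> {1..s}" using 6 s_pos by (auto simp: idx_def)
      then show ?case
        unfolding Let_def
        by (intro phi_family_estimates[where \<rho> = "lam * r" and w = "zc r (idx s i)" and \<beta> = "\<beta> i",
              folded c_def])
          (use 6 \<eta> m r lam consts_pos m_r centers disjoint alpha1 alpha2 in auto)
    qed (use m r lam in auto)
  qed simp
qed

end
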